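(* In Algorithm 6 (described in the context), assume each function $h_{A_i}$ is non-increasing. Then the values $z_1,\dots,z_s$ obtained in its second round form an optimal solution of the minimax problem $$\min_{q_1,\dots,q_s}\ \max_{1\leq i\leq s}h_{A_i}(q_i)\quad\text{s.t.}\quad \sum_{i=1}^sq_i\leq 2z,\quad q_i\in\{0,1,\dots,z\}\ (i=1,\dots,s).$$
   Context: For $A=\{(x_1,y_1),\dots,(x_l,y_l)\}\subset\mathbb{R}^2$ with $x_1<\dots<x_l$, the piecewise function $h_A:[x_1,\infty)\to\mathbb{R}$ is $h_A(x)=y_i$ for $x_i\leq x<x_{i+1}$ ($x_{l+1}=\infty$). Pairs are compared lexicographically: $(a,b)\prec(a',b')$ iff $a<a'$, or $a=a'$ and $b<b'$. Let $z\geq1$ be an integer, $[z]=\{0,1,\dots,z\}$, and $\Gamma=\{2^r:1\leq r\leq\lfloor\log_2z\rfloor, r\in\mathbb{Z}\}\cup\{0,z\}$. In Algorithm 6 (a two-round distributed coreset construction for $k$-center clustering with $z$ outliers over $s$ sites), each site $i$ computes real numbers $\tilde r_{i,q}$ for $q\in\Gamma$ and sends $h_{A_i}$, where $A_i=\{(q,\tilde r_{i,q}):q\in\Gamma\}$. The server sorts the $s(z+1)$ pairs $(h_{A_i}(q),i)$, $i\in\{1,\dots,s\}$, $q\in[z]$, in lexicographically decreasing order and selects the $(2z+1)$-th largest pair $(h_{A_{i_0}}(q_0),i_0)$. Then for $i\neq i_0$, $z_i=\min\{q\in[z]:(h_{A_i}(q),i)\prec(h_{A_{i_0}}(q_0),i_0)\}$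 (with $z_i=z$ if this set is empty), and $z_{i_0}=\min\{q\in\Gamma:h_{A_{i_0}}(q)=h_{A_{i_0}}(q_0)\}$. *)

theory Defs
  imports Complex_Main "HOL-Library.Product_Lexorder"
begin

definition Gamma :: "nat \<Rightarrow> nat set" where
  "Gamma z = {2 ^ r | r. 1 \<le> r \<and> int r \<le> \<lfloor>log 2 (real z)\<rfloor>} \<union> {0, z}"

text \<open>Piecewise-constant function h_A for a finite set A of points with distinct
  first coordinates: h_A(x) = y_i for x_i <= x < x_{i+1}.\<close>
definition hfun :: "(real \<times> real) set \<Rightarrow> real \<Rightarrow> real" where
  "hfun A x = (THE y. \<exists>xi. (xi, y) \<in> A \<and> xi \<le> x \<and>
                   (\<forall>(x', y') \<in> A. x' \<le> x \<longrightarrow> x' \<le> xi))"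

definition Aset :: "nat \<Rightarrow> (nat \<Rightarrow> nat \<Rightarrow> real) \<Rightarrow> nat \<Rightarrow> (real \<times> real) set" where
  "Aset z r i = (\<lambda>q. (real q, r i q)) ` Gamma z"

definition lex_less :: "real \<times> nat \<Rightarrow> real \<times> nat \<Rightarrow> bool" where
  "lex_less p p' \<longleftrightarrow> fst p < fst p' \<or> (fst p = fst p' \<and> snd p < snd p')"

definition pairs_list :: "nat \<Rightarrow> nat \<Rightarrow> (nat \<Rightarrow> nat \<Rightarrow> real) \<Rightarrow> (real \<times> nat) list" where
  "pairs_list z s r = [(hfun (Aset z r i) (real q), i). i \<leftarrow> [1..<s+1], q \<leftarrow> [0..<z+1]]"

definition selected_pair :: "nat \<Rightarrow> nat \<Rightarrow> (nat \<Rightarrow> nat \<Rightarrow> real) \<Rightarrow> real \<times> nat" where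
  "selected_pair z s r = rev (sort (pairs_list z s r)) ! (2 * z)"

definition zval :: "nat \<Rightarrow> nat \<Rightarrow> (nat \<Rightarrow> nat \<Rightarrow> real) \<Rightarrow> nat \<Rightarrow> nat" where
  "zval z s r i =
     (let (v0, i0) = selected_pair z s r in
      if i = i0 then Min {q \<in> Gamma z. hfun (Aset z r i0) (real q) = v0}
      else (let S = {q \<in> {0..z}. lex_less (hfun (Aset z r i) (real q), i) (v0, i0)}
            in if S = {} then z else Min S))"

end

(* Let p = (v0, i0) be the (2z+1)-th largest of the pairs (h_i(q), i). Since every h_i is
   non-increasing, all pairs of site i with q < z_i lie strictly above p (for i0 because h_i0 is
   constant between consecutive points of Gamma), so sum z_i is at most the number of pairs above p,
   which is at most 2z; moreover z_i = z or h_i(z_i) <= v0. Conversely, at least 2z+1 pairs are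
   >= p, so a feasible q with sum q_i <= 2z leaves at some site j a pair (h_j(q'), j) >= p with
   q' >= q_j, whence h_j(q_j) >= v0 dominates every h_i(z_i) with z_i < z; the other sites have
   h_i(z) <= h_i(q_i). *)

theory Submission
  imports Defs
begin

lemma rev_sort_nth_rank:
  fixes xs :: "'a::linorder list"
  assumes "k < length xs"
  shows "length (filter (\<lambda>x. rev (sort xs) ! k < x) xs) \<le> k"
    and "Suc k \<le> length (filter (\<lambda>x. rev (sort xs) ! k \<le> x) xs)"
proof -
  define ys where "ys = sort xs"
  define j where "j = length ys - Suc k"
  have len: "length ys = length xs"
    by (simp add: ys_def)
  have j: "j < length ys"
    using assms len by (simp add: j_def)
  have pivot: "rev ys ! k = ys ! j"
    using assms by (simp add: rev_nth len j_def)
  have mono: "ys ! a \<le> ys ! b" if "a \<le> b" "b < length ys" for a b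
    using sorted_nth_mono[of ys a b] that by (simp add: ys_def)
  have count: "length (filter P xs) = card {a. a < length ys \<and> P (ys ! a)}" for P
    by (metis filter_sort length_filter_conv_card length_sort ys_def)
  have "{a. a < length ys \<and> ys ! j < ys ! a} \<subseteq> {Suc j..<length ys}"
  proof
    fix a assume "a \<in> {a. a < length ys \<and> ys ! j < ys ! a}"
    moreover from this have "\<not> a \<le> j"
      using mono[of a j] j by auto
    ultimately show "a \<in> {Suc j..<length ys}"
      by simp
  qed
  from card_mono[OF _ this] show "length (filter (\<lambda>x. rev (sort xs) ! k < x) xs) \<le> k"
    using assms len by (simp add: count pivot flip: ys_def) (simp add: j_def)
  have "{j..<length ys} \<subseteq> {a. a < length ys \<and> ys ! j \<le> ys ! a}"
    using mono by auto
  from card_mono[OF _ this] show "Suc k \<le> length (filter (\<lambda>x. rev (sort xs) ! k \<le> x) xs)"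
    using assms len by (simp add: count pivot flip: ys_def) (simp add: j_def)
qed

definition first_below :: "nat \<Rightarrow> (nat \<Rightarrow> 'a::linorder) \<Rightarrow> 'a \<Rightarrow> nat" where
  "first_below z g t = (let S = {q \<in> {0..z}. g q < t} in if S = {} then z else Min S)"

lemma first_below_mem:
  assumes "{q \<in> {0..z}. g q < t} \<noteq> {}"
  shows "first_below z g t \<in> {q \<in> {0..z}. g q < t}"
proof -
  have "Min {q \<in> {0..z}. g q < t} \<in> {q \<in> {0..z}. g q < t}"
    using assms by (intro Min_in) auto
  with assms show ?thesis
    by (simp add: first_below_def)
qed

lemma first_below_le: "first_below z g t \<le> z"
  using first_below_mem[of z g t] by (cases "{q \<in> {0..z}. g q < t} = {}") (auto simp: first_below_def)

lemma first_below_cases: "first_below z g t = z \<or> g (first_below z g t) < t"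
  using first_below_mem[of z g t] by (cases "{q \<in> {0..z}. g q < t} = {}") (auto simp: first_below_def)

lemma first_below_le_card_above:
  assumes "\<And>q. g q \<noteq> t"
  shows "first_below z g t \<le> card {q \<in> {0..z}. t < g q}"
proof -
  have "q \<in> {q \<in> {0..z}. t < g q}" if "q < first_below z g t" for q
  proof -
    have "\<not> g q < t"
    proof
      assume "g q < t"
      with that first_below_le[of z g t] have "q \<in> {q \<in> {0..z}. g q < t}"
        by simp
      then have "Min {q \<in> {0..z}. g q < t} \<le> q"
        by (intro Min_le) auto
      with \<open>g q < t\<close> that show False
        by (auto simp: first_below_def Let_def split: if_splits)
    qed
    with assms[of q] that first_below_le[of z g t] show ?thesis
      by auto
  qed
  then have "{0..<first_below z g t} \<subseteq> {q \<in> {0..z}. t < g q}"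
    by auto
  from card_mono[OF _ this] show ?thesis
    by simp
qed

lemma card_reaching_threshold_le:
  fixes g :: "nat \<Rightarrow> 'a::linorder"
  assumes "antimono g" and "g n < t"
  shows "card {q \<in> {0..z}. t \<le> g q} \<le> n"
proof -
  have "x < n" if "t \<le> g x" for x
  proof (rule ccontr)
    assume "\<not> x < n"
    then have "g x \<le> g n"
      using antimonoD[OF assms(1)] by simp
    with assms(2) that show False
      by simp
  qed
  then have "{q \<in> {0..z}. t \<le> g q} \<subseteq> {0..<n}"
    by auto
  from card_mono[OF _ this] show ?thesis
    by simp
qed

lemma exists_site_reaching_threshold:
  fixes g :: "'i \<Rightarrow> nat \<Rightarrow> 'a::linorder"
  assumes "finite I" and "\<And>i. i \<in> I \<Longrightarrow> antimono (g i)"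
    and "(\<Sum>i\<in>I. q i) < (\<Sum>i\<in>I. card {x \<in> {0..z}. t \<le> g i x})"
  shows "\<exists>j\<in>I. t \<le> g j (q j)"
proof (rule ccontr)
  assume "\<not> ?thesis"
  then have "(\<Sum>i\<in>I. card {x \<in> {0..z}. t \<le> g i x}) \<le> (\<Sum>i\<in>I. q i)"
    using assms(2) by (intro sum_mono card_reaching_threshold_le) (auto simp: not_le)
  with assms(3) show False
    by simp
qed

lemma minimax_le_if_threshold_reached:
  fixes f :: "'i::linorder \<Rightarrow> nat \<Rightarrow> 'b::linorder"
  assumes "finite I"
    and anti: "\<And>i. i \<in> I \<Longrightarrow> antimono (f i)"
    and zv_below: "\<And>i. i \<in> I \<Longrightarrow> zv i = z \<or> f i (zv i) \<le> v0"
    and q_le: "\<And>i. i \<in> I \<Longrightarrow> q i \<le> z"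
    and budget: "(\<Sum>i\<in>I. q i) < (\<Sum>i\<in>I. card {x \<in> {0..z}. (v0, i0) \<le> (f i x, i)})"
  shows "Max ((\<lambda>i. f i (zv i)) ` I) \<le> Max ((\<lambda>i. f i (q i)) ` I)"
proof -
  let ?M = "Max ((\<lambda>i. f i (q i)) ` I)"
  have le_M: "f i (q i) \<le> ?M" if "i \<in> I" for i
    using \<open>finite I\<close> that by simp
  have "antimono (\<lambda>x. (f i x, i))" if "i \<in> I" for i
    using anti[OF that] by (auto simp: antimono_def)
  then obtain j where j: "j \<in> I" "(v0, i0) \<le> (f j (q j), j)"
    using exists_site_reaching_threshold[OF \<open>finite I\<close> _ budget] by blast
  then have v0_le_M: "v0 \<le> ?M"
    using le_M[of j] by (auto simp: less_eq_prod_def)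
  have "f i (zv i) \<le> ?M" if "i \<in> I" for i
  proof (cases "zv i = z")
    case True
    then have "f i (zv i) \<le> f i (q i)"
      using antimonoD[OF anti] q_le that by simp
    with le_M that show ?thesis
      by (meson order_trans)
  qed (use zv_below that v0_le_M in force)
  with j(1) \<open>finite I\<close> show ?thesis
    by (subst Max_le_iff) auto
qed

lemma hfun_graph_eq_Max:
  fixes G :: "nat set"
  assumes "finite G" and "g \<in> G" and "g \<le> q"
  shows "hfun ((\<lambda>g. (real g, y g)) ` G) (real q) = y (Max {g\<in>G. g \<le> q})"
proof -
  let ?A = "(\<lambda>g. (real g, y g)) ` G"
  define m where "m = Max {g\<in>G. g \<le> q}"
  have "m \<in> {g\<in>G. g \<le> q}"
    unfolding m_def using assms by (intro Max_in) auto
  then have m: "m \<in> G" "m \<le> q"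
    by simp_all
  have below_m: "g' \<le> m" if "g' \<in> G" "g' \<le> q" for g'
    using assms that by (auto simp: m_def)
  show ?thesis
    unfolding hfun_def m_def[symmetric]
  proof (rule the_equality)
    show "\<exists>xi. (xi, y m) \<in> ?A \<and> xi \<le> real q \<and> (\<forall>(x', y') \<in> ?A. x' \<le> real q \<longrightarrow> x' \<le> xi)"
      using m below_m by (intro exI[of _ "real m"]) auto
  next
    fix y' assume "\<exists>xi. (xi, y') \<in> ?A \<and> xi \<le> real q \<and> (\<forall>(x', y') \<in> ?A. x' \<le> real q \<longrightarrow> x' \<le> xi)"
    then obtain g' where "g' \<in> G" "g' \<le> q" "y' = y g'" "m \<le> g'"
      using m by fastforce
    then show "y' = y m"
      using below_m by (metis le_antisym)
  qed
qed

lemma hfun_graph_attained_at_breakpoint: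
  fixes G :: "nat set"
  assumes "finite G" and "0 \<in> G"
  shows "\<exists>g\<in>G. g \<le> q \<and>
    hfun ((\<lambda>g. (real g, y g)) ` G) (real g) = hfun ((\<lambda>g. (real g, y g)) ` G) (real q)"
proof -
  define m where "m = Max {g\<in>G. g \<le> q}"
  have "m \<in> {g\<in>G. g \<le> q}"
    unfolding m_def using assms by (intro Max_in) auto
  then have m: "m \<in> G" "m \<le> q"
    by simp_all
  have "Max {g\<in>G. g \<le> m} = m"
    using assms(1) m by (intro Max_eqI) auto
  then have "hfun ((\<lambda>g. (real g, y g)) ` G) (real m) = hfun ((\<lambda>g. (real g, y g)) ` G) (real q)"
    using hfun_graph_eq_Max[OF assms(1) m(1) order_refl] hfun_graph_eq_Max[OF assms(1) m]
    by (simp add: m_def)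
  with m show ?thesis
    by blast
qed

lemma zero_in_Gamma: "0 \<in> Gamma z"
  by (simp add: Gamma_def)

lemma Gamma_subset_atMost: "Gamma z \<subseteq> {..z}"
proof
  fix g assume "g \<in> Gamma z"
  then consider "g \<in> {0, z}" | k where "g = 2 ^ k" "1 \<le> k" "int k \<le> \<lfloor>log 2 (real z)\<rfloor>"
    unfolding Gamma_def by blast
  then show "g \<in> {..z}"
  proof cases
    case 2
    then have k: "real k \<le> log 2 (real z)"
      by (metis le_floor_iff of_int_of_nat_eq)
    with \<open>1 \<le> k\<close> have "z > 0"
      by (cases "z = 0") (auto simp: log_def)
    with k have "2 powr real k \<le> real z"
      by (simp add: le_log_iff)
    then have "real (2 ^ k) \<le> real z"
      by (simp add: powr_realpow)
    then show ?thesis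
      using \<open>g = 2 ^ k\<close> by (simp del: of_nat_power)
  qed auto
qed

lemma finite_Gamma: "finite (Gamma z)"
  using Gamma_subset_atMost finite_subset by blast

lemma hfun_Aset_attained_in_Gamma:
  "\<exists>g\<in>Gamma z. g \<le> q \<and> hfun (Aset z r i) (real g) = hfun (Aset z r i) (real q)"
  unfolding Aset_def by (rule hfun_graph_attained_at_breakpoint[OF finite_Gamma zero_in_Gamma])

lemma lex_less_iff_less: "lex_less p p' \<longleftrightarrow> p < p'"
  by (cases p; cases p') (auto simp: lex_less_def)

lemma length_filter_pairs_list:
  "length (filter P (pairs_list z s r)) =
     (\<Sum>i\<in>{1..s}. card {q\<in>{0..z}. P (hfun (Aset z r i) (real q), i)})"
proof -
  have "length (filter P (pairs_list z s r)) =
      (\<Sum>i\<leftarrow>[1..<s+1]. length (filter (\<lambda>q. P (hfun (Aset z r i) (real q), i)) [0..<z+1]))"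
    by (simp del: upt_Suc add: pairs_list_def filter_concat length_concat o_def filter_map)
  also have "\<dots> = (\<Sum>i\<in>{1..s}. length (filter (\<lambda>q. P (hfun (Aset z r i) (real q), i)) [0..<z+1]))"
    by (simp del: upt_Suc add: sum_list_distinct_conv_sum_set atLeastLessThanSuc_atLeastAtMost)
  also have "\<dots> = (\<Sum>i\<in>{1..s}. card {q\<in>{0..z}. P (hfun (Aset z r i) (real q), i)})"
    by (intro sum.cong refl, simp only: length_filter_conv_card length_upt, intro arg_cong[where f = card])
      (auto simp del: upt_Suc simp: nth_upt)
  finally show ?thesis .
qed

lemma pairs_list_memD:
  assumes "(v, i) \<in> set (pairs_list z s r)"
  shows "i \<in> {1..s}" and "\<exists>q\<le>z. v = hfun (Aset z r i) (real q)"
  using assms by (auto simp del: upt_Suc simp: pairs_list_def)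
    (blast dest: less_Suc_eq_le[THEN iffD1])

lemma selected_pair_rank:
  assumes "s \<ge> 2" and sel: "selected_pair z s r = (v0, i0)"
  shows "(\<Sum>i\<in>{1..s}. card {q \<in> {0..z}. (v0, i0) < (hfun (Aset z r i) (real q), i)}) \<le> 2 * z"
    and "2 * z < (\<Sum>i\<in>{1..s}. card {q \<in> {0..z}. (v0, i0) \<le> (hfun (Aset z r i) (real q), i)})"
    and "(v0, i0) \<in> set (pairs_list z s r)"
proof -
  have "length (pairs_list z s r) = s * (z + 1)"
    using length_filter_pairs_list[of "\<lambda>_. True" z s r] by simp
  also have "2 * z < s * (z + 1)"
    using mult_le_mono1[OF \<open>s \<ge> 2\<close>, of "z + 1"] by simp
  finally have k: "2 * z < length (pairs_list z s r)" .
  have pivot: "rev (sort (pairs_list z s r)) ! (2 * z) = (v0, i0)"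
    using sel by (simp add: selected_pair_def)
  show "(\<Sum>i\<in>{1..s}. card {q \<in> {0..z}. (v0, i0) < (hfun (Aset z r i) (real q), i)}) \<le> 2 * z"
    using rev_sort_nth_rank(1)[OF k] by (simp add: pivot length_filter_pairs_list)
  show "2 * z < (\<Sum>i\<in>{1..s}. card {q \<in> {0..z}. (v0, i0) \<le> (hfun (Aset z r i) (real q), i)})"
    using rev_sort_nth_rank(2)[OF k] by (simp add: pivot length_filter_pairs_list)
  show "(v0, i0) \<in> set (pairs_list z s r)"
    using nth_mem[of "2 * z" "rev (sort (pairs_list z s r))"] k by (simp add: pivot)
qed

lemma zval_selected_site:
  assumes sel: "selected_pair z s r = (v0, i0)"
    and anti: "antimono (\<lambda>q. hfun (Aset z r i0) (real q))"
    and q0: "q0 \<le> z" "v0 = hfun (Aset z r i0) (real q0)"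
  shows "zval z s r i0 \<le> z"
    and "hfun (Aset z r i0) (real (zval z s r i0)) = v0"
    and "zval z s r i0 \<le> card {q \<in> {0..z}. (v0, i0) < (hfun (Aset z r i0) (real q), i0)}"
proof -
  define h where "h q = hfun (Aset z r i0) (real q)" for q
  define T where "T = {q \<in> Gamma z. h q = v0}"
  have zval: "zval z s r i0 = Min T"
    by (simp add: zval_def sel T_def h_def)
  have "finite T"
    by (simp add: T_def finite_Gamma)
  have "T \<noteq> {}"
    using hfun_Aset_attained_in_Gamma[of z q0 r i0] q0 by (auto simp: T_def h_def)
  with \<open>finite T\<close> have "Min T \<in> T"
    by simp
  then show "zval z s r i0 \<le> z" and h_zval: "hfun (Aset z r i0) (real (zval z s r i0)) = v0"
    using Gamma_subset_atMost by (auto simp: zval T_def h_def)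
  (* h is constant between consecutive points of Gamma, so h q = v0 would put a point of Gamma
     below q into T. *)
  have "v0 < h q" if "q < Min T" for q
  proof -
    obtain g where g: "g \<in> Gamma z" "g \<le> q" "h g = h q"
      using hfun_Aset_attained_in_Gamma[of z q r i0] by (auto simp: h_def)
    have "h q \<noteq> v0"
    proof
      assume "h q = v0"
      with g \<open>finite T\<close> have "Min T \<le> g"
        by (intro Min_le) (auto simp: T_def)
      with g(2) that show False
        by simp
    qed
    moreover have "h (Min T) \<le> h q"
      using antimonoD[OF anti] that by (simp add: h_def)
    ultimately show ?thesis
      using h_zval by (simp add: zval h_def)
  qed
  then have "{0..<zval z s r i0} \<subseteq> {q \<in> {0..z}. (v0, i0) < (h q, i0)}"
    using \<open>zval z s r i0 \<le> z\<close> unfolding zval by (auto simp: less_prod_def)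
  from card_mono[OF _ this] show "zval z s r i0 \<le> card {q \<in> {0..z}. (v0, i0) < (hfun (Aset z r i0) (real q), i0)}"
    by (simp add: h_def)
qed

lemma zval_other_site:
  assumes "selected_pair z s r = (v0, i0)" and "i \<noteq> i0"
  shows "zval z s r i = first_below z (\<lambda>q. (hfun (Aset z r i) (real q), i)) (v0, i0)"
  using assms by (simp add: zval_def first_below_def lex_less_iff_less)

lemma zval_site_bounds:
  assumes sel: "selected_pair z s r = (v0, i0)"
    and anti: "antimono (\<lambda>q. hfun (Aset z r i0) (real q))"
    and q0: "q0 \<le> z" "v0 = hfun (Aset z r i0) (real q0)"
  shows "zval z s r i \<le> z" (is ?le)
    and "zval z s r i \<le> card {q \<in> {0..z}. (v0, i0) < (hfun (Aset z r i) (real q), i)}" (is ?le_card)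
    and "zval z s r i = z \<or> hfun (Aset z r i) (real (zval z s r i)) \<le> v0" (is ?below)
proof -
  have "?le \<and> ?le_card \<and> ?below"
  proof (cases "i = i0")
    case True
    then show ?thesis
      using zval_selected_site[OF sel anti q0] by simp
  next
    case False
    let ?g = "\<lambda>q. (hfun (Aset z r i) (real q), i)"
    have zval: "zval z s r i = first_below z ?g (v0, i0)"
      by (rule zval_other_site[OF sel False])
    have "?g q \<noteq> (v0, i0)" for q
      using False by simp
    then have ?le_card
      unfolding zval by (rule first_below_le_card_above)
    moreover have ?le
      unfolding zval by (rule first_below_le)
    moreover have "zval z s r i = z \<or> ?g (zval z s r i) < (v0, i0)"
      unfolding zval by (rule first_below_cases)
    then have ?below
      by (auto simp: less_prod_def)
    ultimately show ?thesis
      by blast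
  qed
  then show ?le ?le_card ?below
    by simp_all
qed

theorem lemma19:
  fixes z s :: nat and r :: "nat \<Rightarrow> nat \<Rightarrow> real"
  assumes hz: "z \<ge> 1"
    and hs: "s \<ge> 2"
    and noninc: "\<And>i x y. i \<in> {1..s} \<Longrightarrow> 0 \<le> x \<Longrightarrow> x \<le> y \<Longrightarrow>
                   hfun (Aset z r i) y \<le> hfun (Aset z r i) x"
  shows "(\<forall>i\<in>{1..s}. zval z s r i \<in> {0..z})
       \<and> (\<Sum>i\<in>{1..s}. zval z s r i) \<le> 2 * z
       \<and> (\<forall>q :: nat \<Rightarrow> nat. (\<forall>i\<in>{1..s}. q i \<in> {0..z}) \<longrightarrow> (\<Sum>i\<in>{1..s}. q i) \<le> 2 * z \<longrightarrow>
            Max ((\<lambda>i. hfun (Aset z r i) (real (zval z s r i))) ` {1..s})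
              \<le> Max ((\<lambda>i. hfun (Aset z r i) (real (q i))) ` {1..s}))"
proof -
  obtain v0 i0 where sel: "selected_pair z s r = (v0, i0)"
    by fastforce
  note rank = selected_pair_rank[OF hs sel]
  obtain q0 where i0: "i0 \<in> {1..s}" and q0: "q0 \<le> z" "v0 = hfun (Aset z r i0) (real q0)"
    using pairs_list_memD[OF rank(3)] by blast
  have anti: "antimono (\<lambda>q. hfun (Aset z r i) (real q))" if "i \<in> {1..s}" for i
    using noninc[OF that] by (intro antimonoI) simp
  note bounds = zval_site_bounds[OF sel anti[OF i0] q0]
  have "(\<Sum>i\<in>{1..s}. zval z s r i) \<le> 2 * z"
    by (rule order_trans[OF sum_mono rank(1)]) (rule bounds(2))
  moreover have "Max ((\<lambda>i. hfun (Aset z r i) (real (zval z s r i))) ` {1..s})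
      \<le> Max ((\<lambda>i. hfun (Aset z r i) (real (q i))) ` {1..s})"
    if "\<forall>i\<in>{1..s}. q i \<in> {0..z}" and "(\<Sum>i\<in>{1..s}. q i) \<le> 2 * z" for q
  proof (rule minimax_le_if_threshold_reached[where f = "\<lambda>i q. hfun (Aset z r i) (real q)"])
    show "(\<Sum>i\<in>{1..s}. q i) < (\<Sum>i\<in>{1..s}. card {x \<in> {0..z}. (v0, i0) \<le> (hfun (Aset z r i) (real x), i)})"
      using that(2) rank(2) by linarith
  qed (use that anti bounds(3) in auto)
  ultimately show ?thesis
    using bounds(1) by auto
qed

end
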